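(* Consider the LPE-BC with COF with $K=2$ users and $Q\ge1$ layers, and assume $\Pr[N_u\ge q]>0$ for all $u\in\{1,2\}$, $q\in\{1,\dots,Q\}$. The following region is achievable: the set of $(R_1,R_2)$ for which there exist $R_{u,q}\ge0$ ($u\in\{1,2\}$, $q\in\{1,\dots,Q\}$) with $R_u=\sum_{q=1}^Q R_{u,q}$ and $\max_{q}v_q\le1$, where $$v_q=\max\Big(\frac{R_{1,q}}{\Pr[M\ge q]}+\frac{R_{2,q}}{\Pr[N_2\ge q]},\ \frac{R_{1,q}}{\Pr[N_1\ge q]}+\frac{R_{2,q}}{\Pr[M\ge q]}\Big).$$
   Context: LPE-BC with COF: fix integers $K$ (users) and $Q$ (layers) and a finite field $\mathcal{X}$. In each slot $t$ the transmitter sends $X_t=(X_{1,t},\dots,X_{Q,t})\in\mathcal{X}^Q$; a random state $N_t=(N_{1,t},\dots,N_{K,t})\in\{0,\dots,Q\}^K$, i.i.d. across slots with arbitrary fixed joint law of $(N_1,\dots,N_K)$, gives user $k$ the output $Y_{k,t}=(X_{1,t},\dots,X_{N_{k,t},t})$ (an erasure symbol if $N_{k,t}=0$). A length-$n$ code with rates $(R_1,\dots,R_K)$ (packets per slot) has independent uniform messages $W_k$ with $|\mathcal{X}|^{nR_k}$ values, encoders $X_t=f_t(W_1,\dots,W_K,N_1,\dots,N_{t-1})$ (feedback), and decoders $\hat W_k=\mathrm{dec}_k(Y_k^n,N_1,\dots,N_n)$; a rate tuple is achievable if error probability $\Pr[\exists k:\hat W_k\ne W_k]\to0$; the capacity region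 is the convex closure of achievable tuples. Notation: $M:=\max(N_1,N_2)$. *)

theory Defs
  imports "HOL-Analysis.Analysis" "HOL-Probability.Probability"
begin

(* Users are indexed by 1..K, layers by 1..Q, slots by 0..n-1.
   A channel state is a function  s :: nat => nat  with  s k = N_k  for users k in {1..K}
   (and s k = 0 for k outside {1..K}).  Its law is a pmf  P.
   A channel input in one slot is  x :: nat => 'f  (x q = X_q, only q in {1..Q} is ever observed). *)

definition valid_state_law :: "nat \<Rightarrow> nat \<Rightarrow> (nat \<Rightarrow> nat) pmf \<Rightarrow> bool" where
  "valid_state_law K Q P \<longleftrightarrow>
     (\<forall>s\<in>set_pmf P. (\<forall>k\<in>{1..K}. s k \<le> Q) \<and> (\<forall>k. k \<notin> {1..K} \<longrightarrow> s k = 0))"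

definition num_msgs :: "'f::{finite,field} itself \<Rightarrow> nat \<Rightarrow> real \<Rightarrow> nat" where
  "num_msgs TYPE('f) n r = nat \<lceil>real (card (UNIV::'f set)) powr (real n * r)\<rceil>"

definition msg_set :: "'f::{finite,field} itself \<Rightarrow> nat \<Rightarrow> nat \<Rightarrow> (nat \<Rightarrow> real) \<Rightarrow> (nat \<Rightarrow> nat) set" where
  "msg_set TYPE('f) K n R = (\<Pi>\<^sub>E k\<in>{1..K}. {..<num_msgs TYPE('f) n (R k)})"

definition past :: "nat \<Rightarrow> (nat \<Rightarrow> 'a) \<Rightarrow> 'a \<Rightarrow> (nat \<Rightarrow> 'a)" where
  "past t xs d = (\<lambda>t'. if t' < t then xs t' else d)"

(* Encoder:  enc t w ns_past  gives X_t from all messages and the states of slots < t.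
   Channel input sequence: *)
definition chan_input ::
  "(nat \<Rightarrow> (nat \<Rightarrow> nat) \<Rightarrow> (nat \<Rightarrow> (nat \<Rightarrow> nat)) \<Rightarrow> (nat \<Rightarrow> 'f))
   \<Rightarrow> (nat \<Rightarrow> nat) \<Rightarrow> (nat \<Rightarrow> (nat \<Rightarrow> nat)) \<Rightarrow> nat \<Rightarrow> (nat \<Rightarrow> 'f)" where
  "chan_input enc w ns t = enc t w (past t ns (\<lambda>_. 0))"

(* Output of user k in slot t: the first N_{k,t} layers (None = not received / erasure) *)
definition chan_output ::
  "(nat \<Rightarrow> (nat \<Rightarrow> nat) \<Rightarrow> (nat \<Rightarrow> (nat \<Rightarrow> nat)) \<Rightarrow> (nat \<Rightarrow> 'f))
   \<Rightarrow> (nat \<Rightarrow> nat) \<Rightarrow> (nat \<Rightarrow> (nat \<Rightarrow> nat)) \<Rightarrow> nat \<Rightarrow> nat \<Rightarrow> (nat \<Rightarrow> 'f option)" where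
  "chan_output enc w ns k t =
     (\<lambda>q. if 1 \<le> q \<and> q \<le> ns t k then Some (chan_input enc w ns t q) else None)"

(* Decoder:  dec k Y_k^n N^n  (both sequences restricted to slots 0..n-1).
   Error probability with uniform independent messages and i.i.d. states: *)
definition error_prob ::
  "'f::{finite,field} itself \<Rightarrow> nat \<Rightarrow> (nat \<Rightarrow> nat) pmf \<Rightarrow> nat \<Rightarrow> (nat \<Rightarrow> real)
   \<Rightarrow> (nat \<Rightarrow> (nat \<Rightarrow> nat) \<Rightarrow> (nat \<Rightarrow> (nat \<Rightarrow> nat)) \<Rightarrow> (nat \<Rightarrow> 'f))
   \<Rightarrow> (nat \<Rightarrow> (nat \<Rightarrow> (nat \<Rightarrow> 'f option)) \<Rightarrow> (nat \<Rightarrow> (nat \<Rightarrow> nat)) \<Rightarrow> nat) \<Rightarrow> real" where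
  "error_prob TYPE('f) K P n R enc dec =
     (\<Sum>w\<in>msg_set TYPE('f) K n R.
        measure_pmf.prob (Pi_pmf {..<n} (\<lambda>_. 0) (\<lambda>_. P))
          {ns. \<exists>k\<in>{1..K}.
                 dec k (past n (chan_output enc w ns k) (\<lambda>_. None)) (past n ns (\<lambda>_. 0)) \<noteq> w k})
     / real (card (msg_set TYPE('f) K n R))"

definition achievable ::
  "'f::{finite,field} itself \<Rightarrow> nat \<Rightarrow> (nat \<Rightarrow> nat) pmf \<Rightarrow> (nat \<Rightarrow> real) \<Rightarrow> bool" where
  "achievable TYPE('f) K P R \<longleftrightarrow>
     (\<forall>k. k \<notin> {1..K} \<longrightarrow> R k = 0) \<and>
     (\<exists>enc dec. (\<lambda>n. error_prob TYPE('f) K P n R (enc n) (dec n)) \<longlonglongrightarrow> 0)"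

(* convex closure (closure of the convex hull) of a set of K-tuples, K-tuples being
   functions nat => real vanishing outside {1..K}; topology = Euclidean on coordinates 1..K *)
definition convex_closure_K :: "nat \<Rightarrow> (nat \<Rightarrow> real) set \<Rightarrow> (nat \<Rightarrow> real) set" where
  "convex_closure_K K A = {R. (\<forall>k. k \<notin> {1..K} \<longrightarrow> R k = 0) \<and>
     (\<forall>\<epsilon>>0. \<exists>(m::nat) c r. (\<forall>i<m. c i \<ge> 0 \<and> r i \<in> A) \<and> (\<Sum>i<m. c i) = 1 \<and>
        (\<forall>k\<in>{1..K}. \<bar>R k - (\<Sum>i<m. c i * r i k)\<bar> < \<epsilon>))}"

definition capacity_region :: "'f::{finite,field} itself \<Rightarrow> nat \<Rightarrow> (nat \<Rightarrow> nat) pmf \<Rightarrow> (nat \<Rightarrow> real) set" where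
  "capacity_region TYPE('f) K P = convex_closure_K K {R. achievable TYPE('f) K P R}"

end

theory Submission
  imports Defs
begin

(* Each layer q is a two-user erasure broadcast channel with feedback, on which user u receives a
  slot iff q \<le> N_u, and each layer carries its own three-phase code. In phase u the transmitter
  repeats the current symbol of user u until some user has received it. A symbol that only the
  other user received is re-sent in phase 3 as the sum of one such symbol of each user, and each
  user cancels the summand it overheard. Phase u takes the fraction r_u / Pr[M \<ge> q] of the block,
  and phase 3 the fraction max_u r_u (1 / Pr[N_u \<ge> q] - 1 / Pr[M \<ge> q]), so the three phases
  fit into one block exactly when v_q \<le> 1. With a slack \<delta> the slot counts this needs fail only
  with probability exponentially small in the blocklength (Hoeffding), so the rates scaled by
  1 - \<delta> are achievable, and \<delta> \<rightarrow> 0 puts the rate pair itself into the capacity region. *)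

section \<open>Numerical margins\<close>

lemma phase_margins:
  fixes p1 p2 p12 r1 r2 \<delta> \<beta> \<eta> \<alpha>1 \<alpha>2 \<alpha>3 :: real
  assumes p: "0 < p1" "p1 \<le> p12" "p12 \<le> 1" "0 < p2" "p2 \<le> p12"
    and r: "r1 \<ge> 0" "r2 \<ge> 0" and d: "\<delta> > 0"
    and load: "r1 / p1 + r2 / p12 \<le> 1 - \<delta>"
    and defs: "\<beta> = \<delta> * min p1 p2 / 8" "\<eta> = \<beta> * min p1 p2 / 4"
      "\<alpha>1 = r1 / p12 + \<beta>" "\<alpha>2 = r2 / p12 + \<beta>" "\<alpha>3 = 1 - \<alpha>1 - \<alpha>2"
  shows "\<eta> > 0" "\<alpha>1 \<ge> 0" "\<alpha>3 \<ge> 0" "\<alpha>1 * p12 - r1 - \<eta> > 0"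
    "\<alpha>3 * p1 - \<alpha>1 * (p12 - p1) - 2 * \<eta> > 0"
proof -
  define pm where "pm = min p1 p2"
  have eta: "\<eta> = \<beta> * pm / 4" using defs(2) pm_def by simp
  have pm: "0 < pm" "pm \<le> p1" "pm \<le> 1" using p pm_def by auto
  have b: "\<beta> > 0" "\<beta> \<le> \<delta> * p1 / 8"
    unfolding defs(1) pm_def[symmetric] using pm d by (auto intro: divide_right_mono mult_left_mono)
  have e: "\<eta> > 0" "\<eta> \<le> \<beta> / 4"
  proof -
    show "\<eta> > 0" unfolding eta using b pm by simp
    have "\<beta> * pm \<le> \<beta> * 1" using pm b by (intro mult_left_mono) auto
    then show "\<eta> \<le> \<beta> / 4" using eta by simp
  qed
  then show "\<eta> > 0" by simp
  have p12: "p12 > 0" using p by simp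
  have a1p: "\<alpha>1 * p12 = r1 + \<beta> * p12" using defs(3) p12 by (simp add: field_simps)
  have a2p: "\<alpha>2 * p1 = r2 * p1 / p12 + \<beta> * p1" unfolding defs(4) by (simp add: distrib_right)
  show a1: "\<alpha>1 \<ge> 0" using defs(3) r p12 b by auto
  show "\<alpha>1 * p12 - r1 - \<eta> > 0"
  proof -
    have "\<beta> * pm \<le> \<beta> * p12" using pm p b by (intro mult_left_mono) auto
    moreover have "\<beta> * pm / 4 < \<beta> * pm" using b pm by simp
    ultimately have "\<eta> < \<beta> * p12" using eta by linarith
    then show ?thesis using a1p by simp
  qed
  have scaled_load: "r1 + r2 * p1 / p12 \<le> p1 - p1 * \<delta>"
  proof -
    have "p1 * (r1 / p1 + r2 / p12) \<le> p1 * (1 - \<delta>)" using load p by (intro mult_left_mono) auto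
    moreover have "p1 * (r1 / p1 + r2 / p12) = r1 + r2 * p1 / p12" using p by (simp add: field_simps)
    ultimately show ?thesis by (simp add: algebra_simps)
  qed
  have bb: "\<beta> * p12 \<le> \<beta>" "\<beta> * p1 \<le> \<beta>" using b p by (auto intro: mult_left_le)
  have key: "\<alpha>3 * p1 - \<alpha>1 * (p12 - p1) - 2 * \<eta> = p1 - \<alpha>1 * p12 - \<alpha>2 * p1 - 2 * \<eta>"
    unfolding defs(5) by (simp add: algebra_simps)
  have pos: "p1 * \<delta> > 0" using p d by simp
  show phase3: "\<alpha>3 * p1 - \<alpha>1 * (p12 - p1) - 2 * \<eta> > 0"
    using key a1p a2p scaled_load bb b e pos mult.commute[of \<delta> p1] by linarith
  have "\<alpha>1 * (p12 - p1) \<ge> 0" using a1 p by simp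
  then have "\<alpha>3 * p1 > 0" using phase3 e by linarith
  then show "\<alpha>3 \<ge> 0" using p zero_less_mult_pos2 by (metis less_eq_real_def)
qed

lemma phase_counts_suffice:
  fixes n L1 L3 k1 c1 c2 c3 p12 p1 \<alpha>1 \<alpha>3 r1 \<eta> :: real
  assumes "n * \<alpha>1 - 1 \<le> L1" "L1 \<le> n * \<alpha>1" "n * \<alpha>3 - 1 \<le> L3" "k1 \<le> n * r1 + 1"
    and "L1 * p12 - n * \<eta> < c1" "c2 < L1 * (p12 - p1) + n * \<eta>" "L3 * p1 - n * \<eta> < c3"
    and "p1 \<le> p12" "p12 \<ge> 0" "p1 \<ge> 0"
    and "n * (\<alpha>1 * p12 - r1 - \<eta>) \<ge> 1 + p12" "n * (\<alpha>3 * p1 - \<alpha>1 * (p12 - p1) - 2 * \<eta>) \<ge> p1"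
  shows "k1 \<le> c1" "c2 \<le> c3"
proof -
  have "n * \<alpha>1 * p12 - p12 \<le> L1 * p12"
    using mult_right_mono[of "n * \<alpha>1 - 1" L1 p12] assms(1,9) by (simp add: left_diff_distrib)
  moreover have "n * \<alpha>1 * p12 - n * r1 - n * \<eta> \<ge> 1 + p12"
    using assms(11) by (simp add: right_diff_distrib mult.assoc)
  ultimately show "k1 \<le> c1" using assms(4,5) by linarith
  have "L1 * (p12 - p1) \<le> n * \<alpha>1 * (p12 - p1)" using assms(2,8) by (intro mult_right_mono) auto
  moreover have "n * \<alpha>3 * p1 - p1 \<le> L3 * p1"
    using mult_right_mono[of "n * \<alpha>3 - 1" L3 p1] assms(3,10) by (simp add: left_diff_distrib)
  moreover have "n * \<alpha>3 * p1 - n * \<alpha>1 * (p12 - p1) - 2 * (n * \<eta>) \<ge> p1"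
    using assms(12) by (simp add: right_diff_distrib mult.assoc mult.left_commute)
  ultimately show "c2 \<le> c3" using assms(6,7) by linarith
qed

lemma real_nat_floor_ge: "0 \<le> x \<Longrightarrow> x - 1 \<le> real (nat \<lfloor>x\<rfloor>)"
  by linarith

lemma eventually_le_real_mult:
  fixes m c :: real assumes "m > 0"
  shows "eventually (\<lambda>n. c \<le> real n * m) sequentially"
proof -
  have "eventually (\<lambda>n. nat \<lceil>c / m\<rceil> \<le> n) sequentially" by (rule eventually_ge_at_top)
  then show ?thesis
    by (rule eventually_mono) (use assms in \<open>auto simp: field_simps dest!: le_nat_iff[THEN iffD1]\<close>)
qed

lemma hoeffding_linear_deviation_tendsto_zero:
  fixes c :: real assumes "c > 0"
  shows "(\<lambda>n. 2 * exp (- 2 * (real n * c)\<^sup>2 / real n)) \<longlonglongrightarrow> 0"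
proof -
  have "filterlim (\<lambda>n. real n * (2 * c\<^sup>2)) at_top sequentially"
    using assms by (intro filterlim_at_top_mult_tendsto_pos[OF tendsto_const] filterlim_real_sequentially) auto
  then have "(\<lambda>n. 2 * exp (- (real n * (2 * c\<^sup>2)))) \<longlonglongrightarrow> 0"
    using filterlim_compose[OF exp_at_bot iffD1[OF filterlim_uminus_at_top]]
      tendsto_mult[OF tendsto_const[of 2]] by fastforce
  moreover have "eventually (\<lambda>n. 2 * exp (- (real n * (2 * c\<^sup>2)))
      = 2 * exp (- 2 * (real n * c)\<^sup>2 / real n)) sequentially"
    using eventually_gt_at_top[of 0] by eventually_elim (simp add: power2_eq_square)
  ultimately show ?thesis by (rule Lim_transform_eventually)
qed

section \<open>A three-phase code on one layer\<close>

definition count_from :: "nat \<Rightarrow> (nat \<Rightarrow> bool) \<Rightarrow> nat \<Rightarrow> nat" where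
  "count_from s r t = card {t'\<in>{s..<t}. r t'}"

lemma count_from_Suc: "count_from s r (Suc t) = count_from s r t + (if s \<le> t \<and> r t then 1 else 0)"
proof -
  have "{t'\<in>{s..<Suc t}. r t'} = {t'\<in>{s..<t}. r t'} \<union> (if s \<le> t \<and> r t then {t} else {})"
    by (auto simp: less_Suc_eq)
  then show ?thesis unfolding count_from_def by (auto simp: card_insert_if)
qed

lemma count_from_attains:
  assumes "j < count_from s r e"
  shows "\<exists>t\<in>{s..<e}. r t \<and> count_from s r t = j"
  using assms
proof (induction e)
  case 0
  then show ?case by (simp add: count_from_def)
next
  case (Suc e)
  show ?case
  proof (cases "j < count_from s r e")
    case True
    then show ?thesis using Suc.IH by auto
  next
    case False
    then have "s \<le> e \<and> r e" and "j = count_from s r e"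
      using Suc.prems by (auto simp: count_from_Suc split: if_splits)
    then show ?thesis by auto
  qed
qed

lemma count_from_strict_mono:
  assumes "t < t'" "s \<le> t" "r t"
  shows "count_from s r t < count_from s r t'"
proof -
  have "insert t {x\<in>{s..<t}. r x} \<subseteq> {x\<in>{s..<t'}. r x}" using assms by auto
  then have "card (insert t {x\<in>{s..<t}. r x}) \<le> count_from s r t'"
    unfolding count_from_def by (intro card_mono) auto
  then show ?thesis unfolding count_from_def by simp
qed

lemma count_from_inj:
  assumes "r t" "r t'" "s \<le> t" "s \<le> t'" "count_from s r t = count_from s r t'"
  shows "t = t'"
  using count_from_strict_mono[of t t' s r] count_from_strict_mono[of t' t s r] assms
  by (cases t t' rule: linorder_cases) auto

lemma count_from_less_card:
  assumes "r t" "t \<in> {s..<e}"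
  shows "count_from s r t < card {x\<in>{s..<e}. r x}"
  using count_from_strict_mono[of t e s r] assms by (simp add: count_from_def)

lemma count_from_cong:
  assumes "\<And>x. x < t \<Longrightarrow> r x = r' x"
  shows "count_from s r t = count_from s r' t"
  unfolding count_from_def using assms by (intro arg_cong[where f=card]) auto

text \<open>The phase of user 1 occupies the slots [s, s + L); r and r' say which slots user 1 and user 2
  receive. While j < k slots of the phase have been received by some user, the phase sends the
  symbol a j. That symbol is overheard if the slot ending its transmission is received by user 2
  alone; the overheard symbols are numbered in order of their slots.\<close>

definition overheard :: "nat \<Rightarrow> (nat \<Rightarrow> bool) \<Rightarrow> (nat \<Rightarrow> bool) \<Rightarrow> nat \<Rightarrow> nat \<Rightarrow> bool" where
  "overheard s r r' k t \<longleftrightarrow> count_from s (\<lambda>x. r x \<or> r' x) t < k \<and> \<not> r t \<and> r' t"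

definition phase_symbol ::
  "nat \<Rightarrow> (nat \<Rightarrow> bool) \<Rightarrow> (nat \<Rightarrow> bool) \<Rightarrow> nat \<Rightarrow> (nat \<Rightarrow> 'f::field) \<Rightarrow> nat \<Rightarrow> 'f" where
  "phase_symbol s r r' k a t =
     (if count_from s (\<lambda>x. r x \<or> r' x) t < k then a (count_from s (\<lambda>x. r x \<or> r' x) t) else 0)"

text \<open>The i-th overheard symbol, or 0 if there are at most i of them.\<close>

definition overheard_symbol ::
  "nat \<Rightarrow> nat \<Rightarrow> (nat \<Rightarrow> bool) \<Rightarrow> (nat \<Rightarrow> bool) \<Rightarrow> nat \<Rightarrow> (nat \<Rightarrow> 'f::field) \<Rightarrow> nat \<Rightarrow> 'f" where
  "overheard_symbol s L r r' k a i =
     (\<Sum>t\<in>{t\<in>{s..<s+L}. overheard s r r' k t \<and> count_from s (overheard s r r' k) t = i}.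
        a (count_from s (\<lambda>x. r x \<or> r' x) t))"

text \<open>Phase 3 occupies [s3, s3 + L3); in its slot t it sends the sum of the overheard symbols of
  both users whose indices are the numbers of slots of [s3, t) received by their intended user.\<close>

definition layer_code :: "nat \<Rightarrow> nat \<Rightarrow> nat \<Rightarrow> nat \<Rightarrow> nat \<Rightarrow> nat \<Rightarrow> (nat \<Rightarrow> bool) \<Rightarrow> (nat \<Rightarrow> bool)
    \<Rightarrow> nat \<Rightarrow> nat \<Rightarrow> (nat \<Rightarrow> 'f::field) \<Rightarrow> (nat \<Rightarrow> 'f) \<Rightarrow> nat \<Rightarrow> 'f" where
  "layer_code s1 L1 s2 L2 s3 L3 r1 r2 k1 k2 a b t =
    (if t \<in> {s1..<s1+L1} then phase_symbol s1 r1 r2 k1 a t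
     else if t \<in> {s2..<s2+L2} then phase_symbol s2 r2 r1 k2 b t
     else if t \<in> {s3..<s3+L3} then
       overheard_symbol s1 L1 r1 r2 k1 a (count_from s3 r1 t)
         + overheard_symbol s2 L2 r2 r1 k2 b (count_from s3 r2 t)
     else 0)"

lemma layer_code_phase3:
  assumes "t \<notin> {s1..<s1+L1}" "t \<notin> {s2..<s2+L2}" "t \<in> {s3..<s3+L3}"
  shows "layer_code s1 L1 s2 L2 s3 L3 r1 r2 k1 k2 a b t =
    overheard_symbol s1 L1 r1 r2 k1 a (count_from s3 r1 t) + overheard_symbol s2 L2 r2 r1 k2 b (count_from s3 r2 t)"
  unfolding layer_code_def by (simp only: assms if_True if_False)

lemma layer_code_swap:
  assumes "{s1..<s1+L1} \<inter> {s2..<s2+L2} = {}"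
  shows "layer_code s1 L1 s2 L2 s3 L3 r1 r2 k1 k2 a b t = layer_code s2 L2 s1 L1 s3 L3 r2 r1 k2 k1 b a t"
  using assms unfolding layer_code_def by (auto simp: add.commute)

lemma overheard_cong:
  assumes "\<And>x. x \<le> t \<Longrightarrow> r x = q x" "\<And>x. x \<le> t \<Longrightarrow> r' x = q' x"
  shows "overheard s r r' k t = overheard s q q' k t"
proof -
  have "count_from s (\<lambda>x. r x \<or> r' x) t = count_from s (\<lambda>x. q x \<or> q' x) t"
    by (rule count_from_cong) (use assms in auto)
  then show ?thesis unfolding overheard_def using assms by auto
qed

lemma overheard_symbol_cong:
  assumes "\<And>x. x < s + L \<Longrightarrow> r x = q x" "\<And>x. x < s + L \<Longrightarrow> r' x = q' x"
  shows "overheard_symbol s L r r' k a i = overheard_symbol s L q q' k a i"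
proof -
  have ov: "overheard s r r' k x = overheard s q q' k x" if "x < s + L" for x
    by (rule overheard_cong) (use assms that in auto)
  have "count_from s (overheard s r r' k) t = count_from s (overheard s q q' k) t" if "t < s + L" for t
    by (rule count_from_cong) (use ov that in auto)
  then have S: "{t\<in>{s..<s+L}. overheard s r r' k t \<and> count_from s (overheard s r r' k) t = i}
         = {t\<in>{s..<s+L}. overheard s q q' k t \<and> count_from s (overheard s q q' k) t = i}"
    using ov by auto
  have "count_from s (\<lambda>x. r x \<or> r' x) x = count_from s (\<lambda>x. q x \<or> q' x) x" if "x < s + L" for x
    by (rule count_from_cong) (use assms that in auto)
  then show ?thesis unfolding overheard_symbol_def S by (intro sum.cong) auto
qed

lemma layer_code_causal:
  assumes "s1 + L1 \<le> s3" "s2 + L2 \<le> s3"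
    and "\<And>x. x < t \<Longrightarrow> r1 x = q1 x" "\<And>x. x < t \<Longrightarrow> r2 x = q2 x"
  shows "layer_code s1 L1 s2 L2 s3 L3 r1 r2 k1 k2 a b t = layer_code s1 L1 s2 L2 s3 L3 q1 q2 k1 k2 a b t"
proof -
  have c: "count_from s r t = count_from s q t" if "\<And>x. x < t \<Longrightarrow> r x = q x" for s r q
    by (rule count_from_cong) (use that in auto)
  show ?thesis
  proof (cases "t \<in> {s3..<s3+L3} \<and> t \<notin> {s1..<s1+L1} \<and> t \<notin> {s2..<s2+L2}")
    case True
    have "overheard_symbol s1 L1 r1 r2 k1 a i = overheard_symbol s1 L1 q1 q2 k1 a i" for i
      by (rule overheard_symbol_cong) (use assms True in auto)
    moreover have "overheard_symbol s2 L2 r2 r1 k2 b i = overheard_symbol s2 L2 q2 q1 k2 b i" for i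
      by (rule overheard_symbol_cong) (use assms True in auto)
    moreover have "count_from s3 r1 t = count_from s3 q1 t" "count_from s3 r2 t = count_from s3 q2 t"
      by (rule c; use assms in auto)+
    ultimately show ?thesis using True by (simp add: layer_code_phase3)
  next
    case False
    have "count_from s (\<lambda>x. r1 x \<or> r2 x) t = count_from s (\<lambda>x. q1 x \<or> q2 x) t"
      "count_from s (\<lambda>x. r2 x \<or> r1 x) t = count_from s (\<lambda>x. q2 x \<or> q1 x) t" for s
      by (rule c; use assms in auto)+
    then have phases: "phase_symbol s1 r1 r2 k1 a t = phase_symbol s1 q1 q2 k1 a t"
      "phase_symbol s2 r2 r1 k2 b t = phase_symbol s2 q2 q1 k2 b t"
      unfolding phase_symbol_def by simp_all
    show ?thesis using False unfolding layer_code_def by (auto simp: phases)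
  qed
qed

lemma layer_code_decodes:
  fixes a b a' b' :: "nat \<Rightarrow> 'f::field"
  assumes disj: "{s1..<s1+L1} \<inter> {s2..<s2+L2} = {}"
    and order: "s1 + L1 \<le> s3" "s2 + L2 \<le> s3" "s3 + L3 \<le> n"
    and enough_phase: "k1 \<le> card {t\<in>{s1..<s1+L1}. r1 t \<or> r2 t}"
    and enough_phase3: "card {t\<in>{s1..<s1+L1}. \<not> r1 t \<and> r2 t} \<le> card {t\<in>{s3..<s3+L3}. r1 t}"
    and received: "\<And>t. t < n \<Longrightarrow> r1 t \<Longrightarrow>
        layer_code s1 L1 s2 L2 s3 L3 r1 r2 k1 k2 a b t = layer_code s1 L1 s2 L2 s3 L3 r1 r2 k1 k2 a' b' t"
    and j: "j < k1"
  shows "a j = a' j"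
proof -
  let ?X = "layer_code s1 L1 s2 L2 s3 L3 r1 r2 k1 k2 a b"
  let ?X' = "layer_code s1 L1 s2 L2 s3 L3 r1 r2 k1 k2 a' b'"
  let ?rr = "\<lambda>x. r1 x \<or> r2 x"
  let ?D = "overheard s1 r1 r2 k1"
  have "j < count_from s1 ?rr (s1+L1)" using j enough_phase by (simp add: count_from_def)
  then obtain t where t: "t \<in> {s1..<s1+L1}" "?rr t" "count_from s1 ?rr t = j"
    using count_from_attains by blast
  have Xt: "?X t = a j" "?X' t = a' j" using t j unfolding layer_code_def phase_symbol_def by auto
  show ?thesis
  proof (cases "r1 t")
    case True
    then show ?thesis using received[of t] Xt t order by simp
  next
    case False
    have Dt: "?D t" using False t j by (simp add: overheard_def)
    define i where "i = count_from s1 ?D t"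
    have "i < card {x\<in>{s1..<s1+L1}. ?D x}"
      unfolding i_def by (rule count_from_less_card[of ?D t s1 "s1+L1", OF Dt t(1)])
    also have "\<dots> \<le> card {t\<in>{s1..<s1+L1}. \<not> r1 t \<and> r2 t}"
      by (intro card_mono) (auto simp: overheard_def)
    also have "\<dots> \<le> count_from s3 r1 (s3+L3)" using enough_phase3 by (simp add: count_from_def)
    finally obtain t3 where t3: "t3 \<in> {s3..<s3+L3}" "r1 t3" "count_from s3 r1 t3 = i"
      using count_from_attains by blast
    have "{x\<in>{s1..<s1+L1}. ?D x \<and> count_from s1 ?D x = i} = {t}"
      using count_from_inj[of ?D _ t s1] Dt t(1) unfolding i_def by auto
    then have own: "overheard_symbol s1 L1 r1 r2 k1 c i = c j" for c :: "nat \<Rightarrow> 'f"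
      unfolding overheard_symbol_def using t(3) by simp
    have other: "overheard_symbol s2 L2 r2 r1 k2 b m = overheard_symbol s2 L2 r2 r1 k2 b' m" for m
      unfolding overheard_symbol_def
    proof (rule sum.cong[OF refl])
      fix x assume x: "x \<in> {t \<in> {s2..<s2 + L2}. overheard s2 r2 r1 k2 t
                              \<and> count_from s2 (overheard s2 r2 r1 k2) t = m}"
      then have "x \<notin> {s1..<s1+L1}" "x < n" "r1 x" using disj order by (auto simp: overheard_def)
      then show "b (count_from s2 (\<lambda>x. r2 x \<or> r1 x) x) = b' (count_from s2 (\<lambda>x. r2 x \<or> r1 x) x)"
        using received[of x] x unfolding layer_code_def phase_symbol_def overheard_def by auto
    qed
    have "t3 \<notin> {s1..<s1+L1}" "t3 \<notin> {s2..<s2+L2}" "t3 < n" using t3 order by auto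
    then have "?X t3 = a j + overheard_symbol s2 L2 r2 r1 k2 b (count_from s3 r2 t3)"
      "?X' t3 = a' j + overheard_symbol s2 L2 r2 r1 k2 b (count_from s3 r2 t3)"
      using t3 own other by (simp_all add: layer_code_phase3)
    then show ?thesis using received[of t3] t3 \<open>t3 < n\<close> by simp
  qed
qed

lemma layer_code_decodes_first:
  fixes a b a' b' :: "nat \<Rightarrow> 'f::field"
  assumes "L1 + L2 + L3 \<le> n"
    and "k1 \<le> card {t\<in>{0..<L1}. r1 t \<or> r2 t}"
    and "card {t\<in>{0..<L1}. \<not> r1 t \<and> r2 t} \<le> card {t\<in>{L1+L2..<L1+L2+L3}. r1 t}"
    and "\<And>t. t < n \<Longrightarrow> r1 t \<Longrightarrow>
        layer_code 0 L1 L1 L2 (L1+L2) L3 r1 r2 k1 k2 a b t = layer_code 0 L1 L1 L2 (L1+L2) L3 r1 r2 k1 k2 a' b' t"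
    and "j < k1"
  shows "a j = a' j"
  by (rule layer_code_decodes[where ?s1.0=0 and ?L1.0=L1 and ?s2.0=L1 and ?L2.0=L2 and ?s3.0="L1+L2"
        and ?L3.0=L3 and n=n and ?r1.0=r1 and ?r2.0=r2 and ?k1.0=k1 and ?k2.0=k2 and b=b and b'=b'])
     (use assms in auto)

lemma layer_code_decodes_second:
  fixes a b a' b' :: "nat \<Rightarrow> 'f::field"
  assumes "L1 + L2 + L3 \<le> n"
    and "k2 \<le> card {t\<in>{L1..<L1+L2}. r1 t \<or> r2 t}"
    and "card {t\<in>{L1..<L1+L2}. \<not> r2 t \<and> r1 t} \<le> card {t\<in>{L1+L2..<L1+L2+L3}. r2 t}"
    and received: "\<And>t. t < n \<Longrightarrow> r2 t \<Longrightarrow>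
        layer_code 0 L1 L1 L2 (L1+L2) L3 r1 r2 k1 k2 a b t = layer_code 0 L1 L1 L2 (L1+L2) L3 r1 r2 k1 k2 a' b' t"
    and "j < k2"
  shows "b j = b' j"
proof -
  have disj: "{0..<0+L1} \<inter> {L1..<L1+L2} = {}" by auto
  have swapped: "layer_code L1 L2 0 L1 (L1+L2) L3 r2 r1 k2 k1 b a t = layer_code L1 L2 0 L1 (L1+L2) L3 r2 r1 k2 k1 b' a' t"
    if "t < n" "r2 t" for t
    using received[OF that] layer_code_swap[OF disj, of "L1+L2" L3 r1 r2 k1 k2 a b t]
      layer_code_swap[OF disj, of "L1+L2" L3 r1 r2 k1 k2 a' b' t] by simp
  show ?thesis
    by (rule layer_code_decodes[where ?s1.0=L1 and ?L1.0=L2 and ?s2.0=0 and ?L2.0=L1 and ?s3.0="L1+L2"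
        and ?L3.0=L3 and n=n and ?r1.0=r2 and ?r2.0=r1 and ?k1.0=k2 and ?k2.0=k1 and b=a and b'=a'])
       (use assms swapped in \<open>auto simp: add.commute disj_commute\<close>)
qed

section \<open>Concentration of slot counts\<close>

lemma map_pmf_indicator_bernoulli:
  "map_pmf (\<lambda>s. s \<in> A) P = bernoulli_pmf (measure_pmf.prob P A)"
proof (rule pmf_eqI)
  fix b :: bool
  have "measure_pmf.prob P (- A) = 1 - measure_pmf.prob P A"
    using measure_pmf.prob_compl[of A P] by (simp add: Compl_eq_Diff_UNIV)
  moreover have "(\<lambda>s. s \<in> A) -` {True} = A" "(\<lambda>s. s \<in> A) -` {False} = - A" by auto
  ultimately show "pmf (map_pmf (\<lambda>s. s \<in> A) P) b = pmf (bernoulli_pmf (measure_pmf.prob P A)) b"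
    by (cases b) (simp_all add: pmf_map)
qed

lemma prob_only_second:
  "measure_pmf.prob P {s. \<not> A s \<and> B s} = measure_pmf.prob P {s. A s \<or> B s} - measure_pmf.prob P {s. A s}"
proof -
  have "{s. A s \<or> B s} = {s. A s} \<union> {s. \<not> A s \<and> B s}" by auto
  moreover have "measure_pmf.prob P ({s. A s} \<union> {s. \<not> A s \<and> B s})
      = measure_pmf.prob P {s. A s} + measure_pmf.prob P {s. \<not> A s \<and> B s}"
    by (rule measure_pmf.finite_measure_Union) auto
  ultimately show ?thesis by simp
qed

lemma slot_count_binomial:
  fixes n :: nat
  assumes T: "T \<subseteq> {..<n}"
  shows "map_pmf (\<lambda>ns. card {t\<in>T. ns t \<in> A}) (Pi_pmf {..<n} d (\<lambda>_. P))
         = binomial_pmf (card T) (measure_pmf.prob P A)"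
proof -
  let ?p = "measure_pmf.prob P A"
  let ?B = "Pi_pmf {..<n} (d \<in> A) (\<lambda>_. bernoulli_pmf ?p)"
  have "map_pmf (\<lambda>ns t. ns t \<in> A) (Pi_pmf {..<n} d (\<lambda>_. P))
      = map_pmf ((\<circ>) (\<lambda>s. s \<in> A)) (Pi_pmf {..<n} d (\<lambda>_. P))"
    by (rule map_pmf_cong) (auto simp: fun_eq_iff)
  also have "\<dots> = Pi_pmf {..<n} (d \<in> A) (\<lambda>_. map_pmf (\<lambda>s. s \<in> A) P)"
    using Pi_pmf_map[of "{..<n}" "\<lambda>s. s \<in> A" d "d \<in> A" "\<lambda>_. P"] by simp
  also have "\<dots> = ?B" by (simp only: map_pmf_indicator_bernoulli)
  finally have indicators: "map_pmf (\<lambda>ns t. ns t \<in> A) (Pi_pmf {..<n} d (\<lambda>_. P)) = ?B" .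
  have "binomial_pmf (card T) ?p = map_pmf (\<lambda>f. card {t\<in>T. f t}) (Pi_pmf T (d \<in> A) (\<lambda>_. bernoulli_pmf ?p))"
    by (rule binomial_pmf_altdef') (use finite_subset[OF T] in auto)
  also have "\<dots> = map_pmf (\<lambda>f. card {t\<in>T. f t}) (map_pmf (\<lambda>f x. if x \<in> T then f x else (d \<in> A)) ?B)"
    by (subst Pi_pmf_subset[of "{..<n}" T]) (use T in auto)
  also have "\<dots> = map_pmf (\<lambda>f. card {t\<in>T. f t}) ?B"
    unfolding map_pmf_comp by (intro map_pmf_cong refl arg_cong[where f=card]) auto
  also have "\<dots> = map_pmf (\<lambda>ns. card {t\<in>T. ns t \<in> A}) (Pi_pmf {..<n} d (\<lambda>_. P))"
    unfolding indicators[symmetric] map_pmf_comp by (simp only: o_def)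
  finally show ?thesis ..
qed

lemma slot_count_deviation:
  assumes T: "T \<subseteq> {..<n}" and e: "\<epsilon> > 0"
  shows "measure_pmf.prob (Pi_pmf {..<n} d (\<lambda>_. P))
     {ns. \<epsilon> \<le> \<bar>real (card {t\<in>T. ns t \<in> A}) - real (card T) * measure_pmf.prob P A\<bar>}
     \<le> 2 * exp (- 2 * \<epsilon>\<^sup>2 / real n)"
proof (cases "T = {}")
  case True
  then show ?thesis using e by simp
next
  case False
  have card_T: "0 < card T" "card T \<le> n"
    using False finite_subset[OF T] card_mono[OF _ T] by auto
  have binomial: "binomial_distribution (measure_pmf.prob P A)"
    by unfold_locales auto
  have "measure_pmf.prob (Pi_pmf {..<n} d (\<lambda>_. P))
     {ns. \<epsilon> \<le> \<bar>real (card {t\<in>T. ns t \<in> A}) - real (card T) * measure_pmf.prob P A\<bar>}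
     = measure_pmf.prob (map_pmf (\<lambda>ns. card {t\<in>T. ns t \<in> A}) (Pi_pmf {..<n} d (\<lambda>_. P)))
        {x. \<epsilon> \<le> \<bar>real x - real (card T) * measure_pmf.prob P A\<bar>}"
    by (simp add: measure_map_pmf vimage_def)
  also have "\<dots> = measure_pmf.prob (binomial_pmf (card T) (measure_pmf.prob P A))
        {x. \<epsilon> \<le> \<bar>real x - real (card T) * measure_pmf.prob P A\<bar>}"
    by (simp only: slot_count_binomial[OF T])
  also have "\<dots> \<le> 2 * exp (- 2 * \<epsilon>\<^sup>2 / real (card T))"
    by (rule binomial_distribution.prob_abs_ge[OF binomial]) (use card_T e in auto)
  also have "\<dots> \<le> 2 * exp (- 2 * \<epsilon>\<^sup>2 / real n)"
    using card_T e by (simp add: frac_le)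
  finally show ?thesis .
qed

section \<open>Messages and decoding\<close>

lemma msg_set_finite: "finite (msg_set TYPE('f::{finite,field}) K n R)"
  unfolding msg_set_def by (intro finite_PiE) auto

lemma msg_set_nonempty: "msg_set TYPE('f::{finite,field}) K n R \<noteq> {}"
proof -
  have "0 < num_msgs TYPE('f) n r" for r
    unfolding num_msgs_def using finite_UNIV_card_ge_0[where 'a='f] by simp
  then show ?thesis unfolding msg_set_def by (auto simp: PiE_eq_empty_iff)
qed

lemma card_field_ge_2: "card (UNIV::'f::{finite,field} set) \<ge> 2"
  using card_mono[of "UNIV::'f set" "{0,1}"] by simp

lemma num_msgs_le_power:
  assumes "real n * r \<le> real m"
  shows "num_msgs TYPE('f::{finite,field}) n r \<le> card (UNIV::'f set) ^ m"
proof -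
  let ?c = "real (card (UNIV::'f set))"
  have "?c powr (real n * r) \<le> ?c powr (real m)"
    using card_field_ge_2[where 'f='f] assms by (intro powr_mono) auto
  also have "\<dots> = ?c ^ m" using card_field_ge_2[where 'f='f] by (simp add: powr_realpow)
  finally show ?thesis unfolding num_msgs_def by (simp add: ceiling_le_iff nat_le_iff)
qed

lemma chan_output_past:
  assumes "t < n"
  shows "chan_output enc w (past n ns d) k t = chan_output enc w ns k t"
proof -
  have "past t (past n ns d) (\<lambda>_. 0) = past t ns (\<lambda>_. 0)"
    using assms unfolding past_def by (auto simp: fun_eq_iff)
  then have "chan_input enc w (past n ns d) t = chan_input enc w ns t"
    unfolding chan_input_def by simp
  moreover have "past n ns d t = ns t" using assms unfolding past_def by simp
  ultimately show ?thesis unfolding chan_output_def by (simp only:)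
qed

lemma error_prob_le_uniform:
  assumes "\<And>w. w \<in> msg_set TYPE('f::{finite,field}) K n R \<Longrightarrow>
      measure_pmf.prob (Pi_pmf {..<n} (\<lambda>_. 0) (\<lambda>_. P))
        {ns. \<exists>k\<in>{1..K}. dec k (past n (chan_output enc w ns k) (\<lambda>_. None)) (past n ns (\<lambda>_. 0)) \<noteq> w k}
      \<le> B"
  shows "error_prob TYPE('f) K P n R enc dec \<le> B"
proof -
  let ?M = "msg_set TYPE('f) K n R"
  have "0 < card ?M"
    using msg_set_finite[where 'f='f] msg_set_nonempty[where 'f='f] by (simp add: card_gt_0_iff)
  moreover have "(\<Sum>w\<in>?M. measure_pmf.prob (Pi_pmf {..<n} (\<lambda>_. 0) (\<lambda>_. P))
        {ns. \<exists>k\<in>{1..K}. dec k (past n (chan_output enc w ns k) (\<lambda>_. None)) (past n ns (\<lambda>_. 0)) \<noteq> w k})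
      \<le> (\<Sum>w\<in>?M. B)"
    by (rule sum_mono) (rule assms)
  ultimately show ?thesis unfolding error_prob_def by (simp add: divide_le_eq mult.commute)
qed

lemma error_prob_nonneg: "0 \<le> error_prob TYPE('f::{finite,field}) K P n R enc dec"
  unfolding error_prob_def by (intro divide_nonneg_nonneg sum_nonneg) auto

section \<open>Achievability of rates with slack\<close>

locale slack_rates =
  fixes P :: "(nat \<Rightarrow> nat) pmf" and Q :: nat and r :: "nat \<Rightarrow> nat \<Rightarrow> real" and \<delta> :: real
  assumes prob_pos: "\<And>u q. u \<in> {1,2} \<Longrightarrow> q \<in> {1..Q} \<Longrightarrow> measure_pmf.prob P {s. q \<le> s u} > 0"
    and rate_nonneg: "\<And>u q. u \<in> {1,2} \<Longrightarrow> q \<in> {1..Q} \<Longrightarrow> r u q \<ge> 0"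
    and slack_pos: "\<delta> > 0"
    and load_first: "\<And>q. q \<in> {1..Q} \<Longrightarrow> r 1 q / measure_pmf.prob P {s. q \<le> s 1}
        + r 2 q / measure_pmf.prob P {s. q \<le> s 1 \<or> q \<le> s 2} \<le> 1 - \<delta>"
    and load_second: "\<And>q. q \<in> {1..Q} \<Longrightarrow> r 1 q / measure_pmf.prob P {s. q \<le> s 1 \<or> q \<le> s 2}
        + r 2 q / measure_pmf.prob P {s. q \<le> s 2} \<le> 1 - \<delta>"
begin

definition p1 :: "nat \<Rightarrow> real" where "p1 q = measure_pmf.prob P {s. q \<le> s 1}"
definition p2 :: "nat \<Rightarrow> real" where "p2 q = measure_pmf.prob P {s. q \<le> s 2}"
definition p12 :: "nat \<Rightarrow> real" where "p12 q = measure_pmf.prob P {s. q \<le> s 1 \<or> q \<le> s 2}"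

text \<open>On layer q the three phases take the fractions \<alpha>1 q, \<alpha>2 q, \<alpha>3 q of the block; \<beta> q is the
  extra fraction given to each of the first two phases, and \<eta> q bounds the deviation of a slot
  count from its mean, relative to the blocklength.\<close>

definition \<beta> :: "nat \<Rightarrow> real" where "\<beta> q = \<delta> * min (p1 q) (p2 q) / 8"
definition \<eta> :: "nat \<Rightarrow> real" where "\<eta> q = \<beta> q * min (p1 q) (p2 q) / 4"
definition \<alpha>1 :: "nat \<Rightarrow> real" where "\<alpha>1 q = r 1 q / p12 q + \<beta> q"
definition \<alpha>2 :: "nat \<Rightarrow> real" where "\<alpha>2 q = r 2 q / p12 q + \<beta> q"
definition \<alpha>3 :: "nat \<Rightarrow> real" where "\<alpha>3 q = 1 - \<alpha>1 q - \<alpha>2 q"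

definition L1 :: "nat \<Rightarrow> nat \<Rightarrow> nat" where "L1 n q = nat \<lfloor>real n * \<alpha>1 q\<rfloor>"
definition L2 :: "nat \<Rightarrow> nat \<Rightarrow> nat" where "L2 n q = nat \<lfloor>real n * \<alpha>2 q\<rfloor>"
definition L3 :: "nat \<Rightarrow> nat \<Rightarrow> nat" where "L3 n q = nat \<lfloor>real n * \<alpha>3 q\<rfloor>"

definition num_symbols :: "nat \<Rightarrow> nat \<Rightarrow> nat \<Rightarrow> nat" where
  "num_symbols u n q = nat \<lceil>real n * r u q\<rceil>"

definition rates :: "nat \<Rightarrow> real" where
  "rates = (\<lambda>u. if u = 1 then (\<Sum>q=1..Q. r 1 q) else if u = 2 then (\<Sum>q=1..Q. r 2 q) else 0)"

definition symbol_index :: "nat \<Rightarrow> nat \<Rightarrow> (nat \<times> nat) set" where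
  "symbol_index u n = Sigma {1..Q} (\<lambda>q. {..<num_symbols u n q})"

definition msg_symbols :: "nat \<Rightarrow> nat \<Rightarrow> nat \<Rightarrow> nat \<times> nat \<Rightarrow> 'f::{finite,field}" where
  "msg_symbols u n = (SOME f. f ` {..<num_msgs TYPE('f) n (rates u)} \<subseteq> (\<Pi>\<^sub>E x\<in>symbol_index u n. UNIV)
      \<and> inj_on f {..<num_msgs TYPE('f) n (rates u)})"

definition layer_input :: "nat \<Rightarrow> (nat \<Rightarrow> nat \<Rightarrow> nat) \<Rightarrow> (nat \<Rightarrow> nat) \<Rightarrow> nat \<Rightarrow> nat \<Rightarrow> 'f::{finite,field}" where
  "layer_input n ns w q = layer_code 0 (L1 n q) (L1 n q) (L2 n q) (L1 n q + L2 n q) (L3 n q)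
     (\<lambda>t. q \<le> ns t 1) (\<lambda>t. q \<le> ns t 2) (num_symbols 1 n q) (num_symbols 2 n q)
     (\<lambda>j. msg_symbols 1 n (w 1) (q, j)) (\<lambda>j. msg_symbols 2 n (w 2) (q, j))"

definition encoder :: "nat \<Rightarrow> nat \<Rightarrow> (nat \<Rightarrow> nat) \<Rightarrow> (nat \<Rightarrow> nat \<Rightarrow> nat) \<Rightarrow> nat \<Rightarrow> 'f::{finite,field}" where
  "encoder n t w ns = (\<lambda>q. layer_input n ns w q t)"

definition decoder :: "nat \<Rightarrow> nat \<Rightarrow> (nat \<Rightarrow> nat \<Rightarrow> 'f::{finite,field} option) \<Rightarrow> (nat \<Rightarrow> nat \<Rightarrow> nat) \<Rightarrow> nat" where
  "decoder n u Y ns = (SOME w. w \<in> msg_set TYPE('f) 2 n rates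
      \<and> past n (chan_output (encoder n) w ns u) (\<lambda>_. None) = Y) u"

text \<open>The six slot counts per layer that decoding relies on: slots of phase 1 received by some user
  and by user 2 alone, the same for phase 2, and slots of phase 3 received by user 1 and by user 2.\<close>

definition window :: "nat \<Rightarrow> nat \<Rightarrow> nat \<Rightarrow> nat set" where
  "window n q i = [{0..<L1 n q}, {0..<L1 n q}, {L1 n q..<L1 n q + L2 n q}, {L1 n q..<L1 n q + L2 n q},
     {L1 n q + L2 n q..<L1 n q + L2 n q + L3 n q}, {L1 n q + L2 n q..<L1 n q + L2 n q + L3 n q}] ! i"

definition window_event :: "nat \<Rightarrow> nat \<Rightarrow> (nat \<Rightarrow> nat) set" where
  "window_event q i = [{s. q \<le> s 1 \<or> q \<le> s 2}, {s. \<not> q \<le> s 1 \<and> q \<le> s 2},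
     {s. q \<le> s 1 \<or> q \<le> s 2}, {s. \<not> q \<le> s 2 \<and> q \<le> s 1}, {s. q \<le> s 1}, {s. q \<le> s 2}] ! i"

definition deviation :: "nat \<Rightarrow> nat \<Rightarrow> nat \<Rightarrow> (nat \<Rightarrow> nat \<Rightarrow> nat) \<Rightarrow> real" where
  "deviation n q i ns = \<bar>real (card {t\<in>window n q i. ns t \<in> window_event q i})
      - real (card (window n q i)) * measure_pmf.prob P (window_event q i)\<bar>"

definition typical :: "nat \<Rightarrow> (nat \<Rightarrow> nat \<Rightarrow> nat) \<Rightarrow> bool" where
  "typical n ns \<longleftrightarrow> (\<forall>q\<in>{1..Q}. \<forall>i<6. deviation n q i ns < real n * \<eta> q)"

definition long_enough :: "nat \<Rightarrow> bool" where
  "long_enough n \<longleftrightarrow> (\<forall>q\<in>{1..Q}.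
      1 + p12 q \<le> real n * (\<alpha>1 q * p12 q - r 1 q - \<eta> q) \<and>
      p1 q \<le> real n * (\<alpha>3 q * p1 q - \<alpha>1 q * (p12 q - p1 q) - 2 * \<eta> q) \<and>
      1 + p12 q \<le> real n * (\<alpha>2 q * p12 q - r 2 q - \<eta> q) \<and>
      p2 q \<le> real n * (\<alpha>3 q * p2 q - \<alpha>2 q * (p12 q - p2 q) - 2 * \<eta> q))"

abbreviation states :: "nat \<Rightarrow> (nat \<Rightarrow> nat \<Rightarrow> nat) pmf" where
  "states n \<equiv> Pi_pmf {..<n} (\<lambda>_. 0) (\<lambda>_. P)"

lemma prob_bounds:
  assumes "q \<in> {1..Q}"
  shows "0 < p1 q" "0 < p2 q" "p1 q \<le> p12 q" "p2 q \<le> p12 q" "p12 q \<le> 1"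
  using prob_pos[OF _ assms] unfolding p1_def p2_def p12_def
  by (auto intro!: measure_pmf.finite_measure_mono)

lemma rates_nonneg: "q \<in> {1..Q} \<Longrightarrow> 0 \<le> r 1 q" "q \<in> {1..Q} \<Longrightarrow> 0 \<le> r 2 q"
  by (simp_all add: rate_nonneg)

lemma margins_first:
  assumes q: "q \<in> {1..Q}"
  shows "\<eta> q > 0" "\<alpha>1 q \<ge> 0" "\<alpha>3 q \<ge> 0" "\<alpha>1 q * p12 q - r 1 q - \<eta> q > 0"
    "\<alpha>3 q * p1 q - \<alpha>1 q * (p12 q - p1 q) - 2 * \<eta> q > 0"
  by (rule phase_margins[OF prob_bounds(1,3,5,2,4)[OF q] rates_nonneg[OF q] slack_pos
      load_first[OF q, folded p1_def p12_def] \<beta>_def \<eta>_def \<alpha>1_def \<alpha>2_def \<alpha>3_def])+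

lemma margins_second:
  assumes q: "q \<in> {1..Q}"
  shows "\<alpha>2 q \<ge> 0" "\<alpha>2 q * p12 q - r 2 q - \<eta> q > 0"
    "\<alpha>3 q * p2 q - \<alpha>2 q * (p12 q - p2 q) - 2 * \<eta> q > 0"
proof -
  have "r 2 q / p2 q + r 1 q / p12 q \<le> 1 - \<delta>"
    using load_second[OF q] unfolding p2_def p12_def by simp
  moreover have "\<beta> q = \<delta> * min (p2 q) (p1 q) / 8" "\<eta> q = \<beta> q * min (p2 q) (p1 q) / 4"
    "\<alpha>3 q = 1 - \<alpha>2 q - \<alpha>1 q"
    unfolding \<beta>_def \<eta>_def \<alpha>3_def by (simp_all add: min.commute)
  ultimately show "\<alpha>2 q \<ge> 0" "\<alpha>2 q * p12 q - r 2 q - \<eta> q > 0"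
    "\<alpha>3 q * p2 q - \<alpha>2 q * (p12 q - p2 q) - 2 * \<eta> q > 0"
    by (rule phase_margins[OF prob_bounds(2,4,5,1,3)[OF q] rates_nonneg(2)[OF q] rates_nonneg(1)[OF q] slack_pos _ _ _
        \<alpha>2_def \<alpha>1_def])+
qed

lemma phase_lengths_le:
  assumes q: "q \<in> {1..Q}"
  shows "L1 n q + L2 n q + L3 n q \<le> n"
proof -
  have "real (L1 n q) \<le> real n * \<alpha>1 q" "real (L2 n q) \<le> real n * \<alpha>2 q" "real (L3 n q) \<le> real n * \<alpha>3 q"
    unfolding L1_def L2_def L3_def using margins_first[OF q] margins_second[OF q] by (simp_all add: of_nat_floor)
  moreover have "real n * \<alpha>1 q + real n * \<alpha>2 q + real n * \<alpha>3 q = real n"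
    unfolding \<alpha>3_def by (simp add: algebra_simps)
  ultimately show ?thesis by linarith
qed

lemma window_subset: "q \<in> {1..Q} \<Longrightarrow> i < 6 \<Longrightarrow> window n q i \<subseteq> {..<n}"
  using phase_lengths_le[of q n] unfolding window_def
  by (auto simp: less_Suc_eq numeral_eq_Suc)

lemma atypical_prob_le:
  assumes "n > 0"
  shows "measure_pmf.prob (states n) {ns. \<not> typical n ns}
      \<le> (\<Sum>x\<in>{1..Q} \<times> {..<6::nat}. 2 * exp (- 2 * (real n * \<eta> (fst x))\<^sup>2 / real n))"
proof -
  have "{ns. \<not> typical n ns} = (\<Union>x\<in>{1..Q} \<times> {..<6}. {ns. real n * \<eta> (fst x) \<le> deviation n (fst x) (snd x) ns})"
    unfolding typical_def by (simp add: not_less set_eq_iff) force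
  then have "measure_pmf.prob (states n) {ns. \<not> typical n ns}
      \<le> (\<Sum>x\<in>{1..Q} \<times> {..<6::nat}. measure_pmf.prob (states n) {ns. real n * \<eta> (fst x) \<le> deviation n (fst x) (snd x) ns})"
    by (simp add: measure_pmf.finite_measure_subadditive_finite)
  also have "\<dots> \<le> (\<Sum>x\<in>{1..Q} \<times> {..<6::nat}. 2 * exp (- 2 * (real n * \<eta> (fst x))\<^sup>2 / real n))"
  proof (rule sum_mono)
    fix x :: "nat \<times> nat" assume x: "x \<in> {1..Q} \<times> {..<6}"
    have pos: "real n * \<eta> (fst x) > 0" using x assms margins_first(1)[of "fst x"] by auto
    have "window n (fst x) (snd x) \<subseteq> {..<n}" using x by (intro window_subset) auto
    then show "measure_pmf.prob (states n) {ns. real n * \<eta> (fst x) \<le> deviation n (fst x) (snd x) ns}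
        \<le> 2 * exp (- 2 * (real n * \<eta> (fst x))\<^sup>2 / real n)"
      unfolding deviation_def by (rule slot_count_deviation[OF _ pos])
  qed
  finally show ?thesis .
qed

lemma atypical_prob_tendsto_zero: "(\<lambda>n. measure_pmf.prob (states n) {ns. \<not> typical n ns}) \<longlonglongrightarrow> 0"
proof (rule tendsto_sandwich[OF _ _ tendsto_const])
  show "(\<lambda>n. \<Sum>x\<in>{1..Q} \<times> {..<6::nat}. 2 * exp (- 2 * (real n * \<eta> (fst x))\<^sup>2 / real n)) \<longlonglongrightarrow> 0"
    by (rule tendsto_null_sum) (use hoeffding_linear_deviation_tendsto_zero margins_first(1) in auto)
  show "\<forall>\<^sub>F n in sequentially. measure_pmf.prob (states n) {ns. \<not> typical n ns}
      \<le> (\<Sum>x\<in>{1..Q} \<times> {..<6::nat}. 2 * exp (- 2 * (real n * \<eta> (fst x))\<^sup>2 / real n))"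
    using eventually_gt_at_top[of 0] by eventually_elim (rule atypical_prob_le)
qed simp

lemma eventually_long_enough: "eventually long_enough sequentially"
  unfolding long_enough_def
  by (intro eventually_ball_finite ballI eventually_conj eventually_le_real_mult
      margins_first(4,5) margins_second(2,3)) auto

lemma typical_counts_suffice:
  assumes "long_enough n" "typical n ns" and q: "q \<in> {1..Q}"
  defines "P3 \<equiv> {L1 n q + L2 n q..<L1 n q + L2 n q + L3 n q}"
  shows "num_symbols 1 n q \<le> card {t\<in>{0..<L1 n q}. q \<le> ns t 1 \<or> q \<le> ns t 2}"
    "card {t\<in>{0..<L1 n q}. \<not> q \<le> ns t 1 \<and> q \<le> ns t 2} \<le> card {t\<in>P3. q \<le> ns t 1}"
    "num_symbols 2 n q \<le> card {t\<in>{L1 n q..<L1 n q + L2 n q}. q \<le> ns t 1 \<or> q \<le> ns t 2}"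
    "card {t\<in>{L1 n q..<L1 n q + L2 n q}. \<not> q \<le> ns t 2 \<and> q \<le> ns t 1} \<le> card {t\<in>P3. q \<le> ns t 2}"
proof -
  have dev: "deviation n q i ns < real n * \<eta> q" if "i < 6" for i
    using assms(2) q that unfolding typical_def by auto
  have long: "1 + p12 q \<le> real n * (\<alpha>1 q * p12 q - r 1 q - \<eta> q)"
      "p1 q \<le> real n * (\<alpha>3 q * p1 q - \<alpha>1 q * (p12 q - p1 q) - 2 * \<eta> q)"
      "1 + p12 q \<le> real n * (\<alpha>2 q * p12 q - r 2 q - \<eta> q)"
      "p2 q \<le> real n * (\<alpha>3 q * p2 q - \<alpha>2 q * (p12 q - p2 q) - 2 * \<eta> q)"
    using assms(1) q unfolding long_enough_def by auto
  have lengths: "real n * \<alpha>1 q - 1 \<le> real (L1 n q)" "real (L1 n q) \<le> real n * \<alpha>1 q"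
      "real n * \<alpha>2 q - 1 \<le> real (L2 n q)" "real (L2 n q) \<le> real n * \<alpha>2 q"
      "real n * \<alpha>3 q - 1 \<le> real (L3 n q)"
  proof -
    have "0 \<le> real n * \<alpha>1 q" "0 \<le> real n * \<alpha>2 q" "0 \<le> real n * \<alpha>3 q"
      using margins_first[OF q] margins_second[OF q] by simp_all
    then show "real n * \<alpha>1 q - 1 \<le> real (L1 n q)" "real (L1 n q) \<le> real n * \<alpha>1 q"
      "real n * \<alpha>2 q - 1 \<le> real (L2 n q)" "real (L2 n q) \<le> real n * \<alpha>2 q"
      "real n * \<alpha>3 q - 1 \<le> real (L3 n q)"
      unfolding L1_def L2_def L3_def by (simp_all add: of_nat_floor real_nat_floor_ge)
  qed
  have symbols: "real (num_symbols u n q) \<le> real n * r u q + 1" if "u \<in> {1,2}" for u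
    unfolding num_symbols_def
    using mult_nonneg_nonneg[OF of_nat_0_le_iff[of n] rate_nonneg[OF that q]] by linarith
  have only: "measure_pmf.prob P {s. \<not> q \<le> s 1 \<and> q \<le> s 2} = p12 q - p1 q"
      "measure_pmf.prob P {s. \<not> q \<le> s 2 \<and> q \<le> s 1} = p12 q - p2 q"
    unfolding p1_def p2_def p12_def by (simp_all add: prob_only_second disj_commute)
  have "\<bar>card {t\<in>{0..<L1 n q}. q \<le> ns t 1 \<or> q \<le> ns t 2} - real (L1 n q) * p12 q\<bar> < real n * \<eta> q"
    using dev[of 0] unfolding deviation_def window_def window_event_def by (simp add: p12_def)
  moreover have "\<bar>card {t\<in>{0..<L1 n q}. \<not> q \<le> ns t 1 \<and> q \<le> ns t 2} - real (L1 n q) * (p12 q - p1 q)\<bar>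
      < real n * \<eta> q"
    using dev[of 1] only(1) unfolding deviation_def window_def window_event_def by simp
  moreover have "\<bar>card {t\<in>{L1 n q..<L1 n q + L2 n q}. q \<le> ns t 1 \<or> q \<le> ns t 2} - real (L2 n q) * p12 q\<bar>
      < real n * \<eta> q"
    using dev[of 2] unfolding deviation_def window_def window_event_def by (simp add: p12_def)
  moreover have "\<bar>card {t\<in>{L1 n q..<L1 n q + L2 n q}. \<not> q \<le> ns t 2 \<and> q \<le> ns t 1}
      - real (L2 n q) * (p12 q - p2 q)\<bar> < real n * \<eta> q"
    using dev[of 3] only(2) unfolding deviation_def window_def window_event_def by simp
  moreover have "\<bar>card {t\<in>P3. q \<le> ns t 1} - real (L3 n q) * p1 q\<bar> < real n * \<eta> q"
    using dev[of 4] unfolding deviation_def window_def window_event_def P3_def by (simp add: p1_def)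
  moreover have "\<bar>card {t\<in>P3. q \<le> ns t 2} - real (L3 n q) * p2 q\<bar> < real n * \<eta> q"
    using dev[of 5] unfolding deviation_def window_def window_event_def P3_def by (simp add: p2_def)
  ultimately have
    "real (L1 n q) * p12 q - real n * \<eta> q < card {t\<in>{0..<L1 n q}. q \<le> ns t 1 \<or> q \<le> ns t 2}"
    "card {t\<in>{0..<L1 n q}. \<not> q \<le> ns t 1 \<and> q \<le> ns t 2} < real (L1 n q) * (p12 q - p1 q) + real n * \<eta> q"
    "real (L2 n q) * p12 q - real n * \<eta> q < card {t\<in>{L1 n q..<L1 n q + L2 n q}. q \<le> ns t 1 \<or> q \<le> ns t 2}"
    "card {t\<in>{L1 n q..<L1 n q + L2 n q}. \<not> q \<le> ns t 2 \<and> q \<le> ns t 1}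
      < real (L2 n q) * (p12 q - p2 q) + real n * \<eta> q"
    "real (L3 n q) * p1 q - real n * \<eta> q < card {t\<in>P3. q \<le> ns t 1}"
    "real (L3 n q) * p2 q - real n * \<eta> q < card {t\<in>P3. q \<le> ns t 2}"
    unfolding abs_less_iff by linarith+
  note counts = this
  have "real (num_symbols 1 n q) \<le> card {t\<in>{0..<L1 n q}. q \<le> ns t 1 \<or> q \<le> ns t 2}"
    "card {t\<in>{0..<L1 n q}. \<not> q \<le> ns t 1 \<and> q \<le> ns t 2} \<le> real (card {t\<in>P3. q \<le> ns t 1})"
    using phase_counts_suffice[OF lengths(1,2,5) symbols[of 1] counts(1,2,5) prob_bounds(3)[OF q] _ _ long(1,2)]
      prob_bounds[OF q] by auto
  moreover have "real (num_symbols 2 n q) \<le> card {t\<in>{L1 n q..<L1 n q + L2 n q}. q \<le> ns t 1 \<or> q \<le> ns t 2}"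
    "card {t\<in>{L1 n q..<L1 n q + L2 n q}. \<not> q \<le> ns t 2 \<and> q \<le> ns t 1} \<le> real (card {t\<in>P3. q \<le> ns t 2})"
    using phase_counts_suffice[OF lengths(3,4,5) symbols[of 2] counts(3,4,6) prob_bounds(4)[OF q] _ _ long(3,4)]
      prob_bounds[OF q] by auto
  ultimately show "num_symbols 1 n q \<le> card {t\<in>{0..<L1 n q}. q \<le> ns t 1 \<or> q \<le> ns t 2}"
    "card {t\<in>{0..<L1 n q}. \<not> q \<le> ns t 1 \<and> q \<le> ns t 2} \<le> card {t\<in>P3. q \<le> ns t 1}"
    "num_symbols 2 n q \<le> card {t\<in>{L1 n q..<L1 n q + L2 n q}. q \<le> ns t 1 \<or> q \<le> ns t 2}"
    "card {t\<in>{L1 n q..<L1 n q + L2 n q}. \<not> q \<le> ns t 2 \<and> q \<le> ns t 1} \<le> card {t\<in>P3. q \<le> ns t 2}"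
    by simp_all
qed

lemma msg_symbols_inj:
  assumes "u \<in> {1,2}"
  shows "inj_on (msg_symbols u n :: nat \<Rightarrow> _ \<Rightarrow> 'f::{finite,field}) {..<num_msgs TYPE('f) n (rates u)}"
    "(msg_symbols u n :: nat \<Rightarrow> _ \<Rightarrow> 'f) ` {..<num_msgs TYPE('f) n (rates u)} \<subseteq> (\<Pi>\<^sub>E x\<in>symbol_index u n. UNIV)"
proof -
  have "real n * rates u = (\<Sum>q\<in>{1..Q}. real n * r u q)"
    using assms unfolding rates_def by (auto simp: sum_distrib_left)
  also have "\<dots> \<le> (\<Sum>q\<in>{1..Q}. real (num_symbols u n q))"
    unfolding num_symbols_def by (intro sum_mono) (simp add: real_nat_ceiling_ge)
  also have "\<dots> = real (card (symbol_index u n))" unfolding symbol_index_def by simp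
  finally have "num_msgs TYPE('f) n (rates u) \<le> card (UNIV::'f set) ^ card (symbol_index u n)"
    by (rule num_msgs_le_power)
  also have "\<dots> = card (\<Pi>\<^sub>E x\<in>symbol_index u n. (UNIV::'f set))"
    unfolding symbol_index_def by (simp add: card_PiE)
  finally have "card {..<num_msgs TYPE('f) n (rates u)} \<le> card (\<Pi>\<^sub>E x\<in>symbol_index u n. (UNIV::'f set))"
    by simp
  moreover have "finite (\<Pi>\<^sub>E x\<in>symbol_index u n. (UNIV::'f set))"
    unfolding symbol_index_def by (intro finite_PiE) auto
  ultimately have "\<exists>f. f ` {..<num_msgs TYPE('f) n (rates u)} \<subseteq> (\<Pi>\<^sub>E x\<in>symbol_index u n. (UNIV::'f set))
      \<and> inj_on f {..<num_msgs TYPE('f) n (rates u)}"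
    by (intro card_le_inj finite_lessThan)
  then have "(msg_symbols u n :: nat \<Rightarrow> _ \<Rightarrow> 'f) ` {..<num_msgs TYPE('f) n (rates u)}
        \<subseteq> (\<Pi>\<^sub>E x\<in>symbol_index u n. UNIV)
      \<and> inj_on (msg_symbols u n :: nat \<Rightarrow> _ \<Rightarrow> 'f) {..<num_msgs TYPE('f) n (rates u)}"
    unfolding msg_symbols_def by (rule someI_ex)
  then show "inj_on (msg_symbols u n :: nat \<Rightarrow> _ \<Rightarrow> 'f) {..<num_msgs TYPE('f) n (rates u)}"
    "(msg_symbols u n :: nat \<Rightarrow> _ \<Rightarrow> 'f) ` {..<num_msgs TYPE('f) n (rates u)} \<subseteq> (\<Pi>\<^sub>E x\<in>symbol_index u n. UNIV)"
    by simp_all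
qed

lemma encoder_causal:
  "encoder n t w (past t ns (\<lambda>_. 0)) q = (layer_input n ns w q t :: 'f::{finite,field})"
  unfolding encoder_def layer_input_def by (rule layer_code_causal) (auto simp: past_def)

lemma layer_input_eq_if_same_output:
  assumes "past n (chan_output (encoder n :: _ \<Rightarrow> _ \<Rightarrow> _ \<Rightarrow> _ \<Rightarrow> 'f::{finite,field}) w' ns u) (\<lambda>_. None)
      = past n (chan_output (encoder n) w ns u) (\<lambda>_. None)"
    and "t < n" "1 \<le> q" "q \<le> ns t u"
  shows "(layer_input n ns w' q t :: 'f) = layer_input n ns w q t"
proof -
  have "chan_output (encoder n :: _ \<Rightarrow> _ \<Rightarrow> _ \<Rightarrow> _ \<Rightarrow> 'f) w' ns u t q = chan_output (encoder n) w ns u t q"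
    using fun_cong[OF assms(1), of t] assms(2) unfolding past_def by simp
  then show ?thesis using assms(2-) unfolding chan_output_def chan_input_def encoder_causal by simp
qed

lemma layer_symbols_agree:
  fixes w w' :: "nat \<Rightarrow> nat"
  assumes "long_enough n" "typical n ns" and u: "u \<in> {1,2}" and q: "q \<in> {1..Q}"
    and j: "j < num_symbols u n q"
    and agree: "\<And>t. t < n \<Longrightarrow> q \<le> ns t u \<Longrightarrow>
      (layer_input n ns w' q t :: 'f::{finite,field}) = layer_input n ns w q t"
  shows "(msg_symbols u n (w' u) (q, j) :: 'f) = msg_symbols u n (w u) (q, j)"
proof -
  note counts = typical_counts_suffice[OF assms(1,2) q]
  note lengths = phase_lengths_le[OF q]
  note agree' = agree[unfolded layer_input_def]
  consider "u = 1" | "u = 2" using u by auto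
  then show ?thesis
  proof cases
    case 1
    show ?thesis using layer_code_decodes_first[OF lengths counts(1,2) agree'] j 1 by simp
  next
    case 2
    show ?thesis using layer_code_decodes_second[OF lengths counts(3,4) agree'] j 2 by simp
  qed
qed

lemma decoder_correct:
  assumes "long_enough n" "typical n ns" and w: "w \<in> msg_set TYPE('f::{finite,field}) 2 n rates"
    and u: "u \<in> {1..2}"
  shows "decoder n u (past n (chan_output (encoder n :: _ \<Rightarrow> _ \<Rightarrow> _ \<Rightarrow> _ \<Rightarrow> 'f) w ns u) (\<lambda>_. None))
      (past n ns (\<lambda>_. 0)) = w u"
proof -
  let ?out = "\<lambda>w ns. past n (chan_output (encoder n :: _ \<Rightarrow> _ \<Rightarrow> _ \<Rightarrow> _ \<Rightarrow> 'f) w ns u) (\<lambda>_. None)"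
  define w' where "w' = (SOME w'. w' \<in> msg_set TYPE('f) 2 n rates \<and> ?out w' (past n ns (\<lambda>_. 0)) = ?out w ns)"
  have out_past: "?out v (past n ns (\<lambda>_. 0)) = ?out v ns" for v
    unfolding past_def[of n "chan_output _ _ _ _"] by (auto simp: fun_eq_iff chan_output_past)
  have "w' \<in> msg_set TYPE('f) 2 n rates \<and> ?out w' (past n ns (\<lambda>_. 0)) = ?out w ns"
    unfolding w'_def by (rule someI[of _ w]) (use w out_past in auto)
  then have w': "w' \<in> msg_set TYPE('f) 2 n rates" and same_output: "?out w' ns = ?out w ns"
    using out_past by auto
  have agree: "(layer_input n ns w' q t :: 'f) = layer_input n ns w q t" if "t < n" "1 \<le> q" "q \<le> ns t u" for t q
    using layer_input_eq_if_same_output[OF same_output that] .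
  have u2: "u \<in> {1,2}" using u by auto
  have "(msg_symbols u n (w' u) x :: 'f) = msg_symbols u n (w u) x" if x: "x \<in> symbol_index u n" for x
  proof -
    obtain q j where xqj: "x = (q, j)" and q: "q \<in> {1..Q}" and j: "j < num_symbols u n q"
      using x unfolding symbol_index_def by blast
    have "(layer_input n ns w' q t :: 'f) = layer_input n ns w q t" if "t < n" "q \<le> ns t u" for t
      using agree[OF that(1) _ that(2)] q by simp
    from layer_symbols_agree[OF assms(1,2) u2 q j this] show ?thesis unfolding xqj .
  qed
  moreover have "w u \<in> {..<num_msgs TYPE('f) n (rates u)}" "w' u \<in> {..<num_msgs TYPE('f) n (rates u)}"
    using w w' u unfolding msg_set_def by (auto simp: PiE_iff)
  moreover note msg_symbols_inj[OF u2, where n=n and 'f='f]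
  ultimately have "(msg_symbols u n (w' u) :: _ \<Rightarrow> 'f) = msg_symbols u n (w u)"
    by (intro PiE_ext[of _ "symbol_index u n" "\<lambda>_. UNIV"]) auto
  then have "w' u = w u"
    using msg_symbols_inj(1)[OF u2, where n=n and 'f='f] \<open>w u \<in> _\<close> \<open>w' u \<in> _\<close> by (auto dest: inj_onD)
  then show ?thesis unfolding decoder_def w'_def by simp
qed

theorem achievable_rates: "achievable TYPE('f::{finite,field}) 2 P rates"
proof -
  have "error_prob TYPE('f) 2 P n rates (encoder n) (decoder n) \<le> measure_pmf.prob (states n) {ns. \<not> typical n ns}"
    if "long_enough n" for n
    using decoder_correct[OF that, where 'f='f]
    by (intro error_prob_le_uniform measure_pmf.finite_measure_mono) auto
  then have "\<forall>\<^sub>F n in sequentially.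
      error_prob TYPE('f) 2 P n rates (encoder n) (decoder n) \<le> measure_pmf.prob (states n) {ns. \<not> typical n ns}"
    using eventually_long_enough by (auto elim: eventually_mono)
  then have "(\<lambda>n. error_prob TYPE('f) 2 P n rates (encoder n) (decoder n)) \<longlonglongrightarrow> 0"
    by (intro tendsto_sandwich[OF _ _ tendsto_const atypical_prob_tendsto_zero])
       (simp_all add: error_prob_nonneg)
  then show ?thesis unfolding achievable_def rates_def by auto
qed

end

section \<open>The capacity region\<close>

lemma scaled_load_le:
  fixes a b p p' c :: real
  assumes "a / p + b / p' \<le> 1" "0 \<le> c"
  shows "c * a / p + c * b / p' \<le> c"
proof -
  have "c * a / p + c * b / p' = c * (a / p + b / p')" by (simp add: distrib_left)
  also have "\<dots> \<le> c" using assms by (simp add: mult_left_le)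
  finally show ?thesis .
qed

lemma mem_capacity_region_if_scaled_achievable:
  assumes zero: "\<And>k. k \<notin> {1..K} \<Longrightarrow> R k = 0"
    and scaled: "\<And>\<delta>. 0 < \<delta> \<Longrightarrow> \<delta> < 1 \<Longrightarrow> achievable TYPE('f::{finite,field}) K P (\<lambda>k. (1 - \<delta>) * R k)"
  shows "R \<in> capacity_region TYPE('f) K P"
  unfolding capacity_region_def convex_closure_K_def
proof (intro CollectI conjI allI impI zero)
  fix \<epsilon> :: real assume "\<epsilon> > 0"
  define S where "S = (\<Sum>k\<in>{1..K}. \<bar>R k\<bar>)"
  define \<delta> where "\<delta> = min (1/2) (\<epsilon> / (S + 1))"
  have S: "0 \<le> S" "\<bar>R k\<bar> \<le> S" if "k \<in> {1..K}" for k
    unfolding S_def using that by (auto intro: sum_nonneg member_le_sum)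
  have \<delta>: "0 < \<delta>" "\<delta> < 1" "\<delta> * (S + 1) \<le> \<epsilon>"
    unfolding \<delta>_def S_def using \<open>\<epsilon> > 0\<close> sum_nonneg[of "{1..K}" "\<lambda>k. \<bar>R k\<bar>"]
    by (auto simp: min_def pos_le_divide_eq[symmetric] add_nonneg_pos)
  have "\<bar>R k - (1 - \<delta>) * R k\<bar> < \<epsilon>" if "k \<in> {1..K}" for k
  proof -
    have "\<bar>R k - (1 - \<delta>) * R k\<bar> = \<delta> * \<bar>R k\<bar>" using \<delta> by (simp add: algebra_simps abs_mult)
    also have "\<dots> < \<delta> * (S + 1)" using \<delta> S[OF that] by simp
    finally show ?thesis using \<delta> by linarith
  qed
  then show "\<exists>(m::nat) c r. (\<forall>i<m. 0 \<le> c i \<and> r i \<in> {R. achievable TYPE('f) K P R}) \<and>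
      (\<Sum>i<m. c i) = 1 \<and> (\<forall>k\<in>{1..K}. \<bar>R k - (\<Sum>i<m. c i * r i k)\<bar> < \<epsilon>)"
    using scaled[OF \<delta>(1,2)]
    by (intro exI[of _ 1] exI[of _ "\<lambda>_. 1"] exI[of _ "\<lambda>_ k. (1 - \<delta>) * R k"]) auto
qed

theorem lemma2:
  fixes P :: "(nat \<Rightarrow> nat) pmf" and Q :: nat and R1 R2 :: real
  assumes "Q \<ge> 1"
    and "valid_state_law 2 Q P"
    and "\<forall>u\<in>{1,2}. \<forall>q\<in>{1..Q}. measure_pmf.prob P {s. s u \<ge> q} > 0"
    and "\<exists>Rq :: nat \<Rightarrow> nat \<Rightarrow> real.
           (\<forall>u\<in>{1,2}. \<forall>q\<in>{1..Q}. Rq u q \<ge> 0) \<and>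
           R1 = (\<Sum>q=1..Q. Rq 1 q) \<and> R2 = (\<Sum>q=1..Q. Rq 2 q) \<and>
           (\<forall>q\<in>{1..Q}.
              max (Rq 1 q / measure_pmf.prob P {s. max (s 1) (s 2) \<ge> q}
                     + Rq 2 q / measure_pmf.prob P {s. s 2 \<ge> q})
                  (Rq 1 q / measure_pmf.prob P {s. s 1 \<ge> q}
                     + Rq 2 q / measure_pmf.prob P {s. max (s 1) (s 2) \<ge> q}) \<le> 1)"
  shows "(\<lambda>k. if k = 1 then R1 else if k = 2 then R2 else 0)
           \<in> capacity_region TYPE('f::{finite,field}) 2 P"
proof (rule mem_capacity_region_if_scaled_achievable)
  obtain Rq :: "nat \<Rightarrow> nat \<Rightarrow> real" where nonneg: "\<forall>u\<in>{1,2}. \<forall>q\<in>{1..Q}. Rq u q \<ge> 0"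
    and R: "R1 = (\<Sum>q=1..Q. Rq 1 q)" "R2 = (\<Sum>q=1..Q. Rq 2 q)"
    and load: "\<forall>q\<in>{1..Q}.
      Rq 1 q / measure_pmf.prob P {s. q \<le> s 1 \<or> q \<le> s 2} + Rq 2 q / measure_pmf.prob P {s. q \<le> s 2} \<le> 1 \<and>
      Rq 1 q / measure_pmf.prob P {s. q \<le> s 1} + Rq 2 q / measure_pmf.prob P {s. q \<le> s 1 \<or> q \<le> s 2} \<le> 1"
    using assms(4) unfolding le_max_iff_disj max.bounded_iff by (auto simp: le_max_iff_disj)
  fix \<delta> :: real assume "0 < \<delta>" "\<delta> < 1"
  interpret slack_rates P Q "\<lambda>u q. (1 - \<delta>) * Rq u q" \<delta>
  proof
    show "\<And>u q. u \<in> {1, 2} \<Longrightarrow> q \<in> {1..Q} \<Longrightarrow> 0 < measure_pmf.prob P {s. q \<le> s u}"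
      using assms(3) by auto
    show "\<And>u q. u \<in> {1, 2} \<Longrightarrow> q \<in> {1..Q} \<Longrightarrow> 0 \<le> (1 - \<delta>) * Rq u q"
      using nonneg \<open>\<delta> < 1\<close> by (auto intro: mult_nonneg_nonneg)
  qed (use \<open>0 < \<delta>\<close> \<open>\<delta> < 1\<close> load in \<open>auto intro!: scaled_load_le\<close>)
  have "rates = (\<lambda>k. (1 - \<delta>) * (if k = 1 then R1 else if k = 2 then R2 else 0))"
    unfolding rates_def R by (simp add: sum_distrib_left fun_eq_iff)
  then show "achievable TYPE('f) 2 P (\<lambda>k. (1 - \<delta>) * (if k = 1 then R1 else if k = 2 then R2 else 0))"
    using achievable_rates by simp
qed auto

end
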